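(* The fixed-point set $M_{\hat\sigma}$ is nonempty only if $K\cap\bigcap_{k=1}^dW_k\neq\varnothing$. The non-degeneracy condition (D) fails at every point of $\mu^{-1}(0)$ lying over $M_{\hat\sigma}$. In particular, if $N$ acts freely and properly on $\mu^{-1}(0)$ and condition (S) holds, then $M$ is a smooth manifold but its induced hypersymplectic structure is degenerate at every point of $M_{\hat\sigma}$.
   Context: Setting: $\mathbb C^{d,d}=\mathbb C^d\times\mathbb C^d$ with coordinates $(z,w)$, $g=\mathrm{Re}\sum_k(dz_k\,d\bar z_k-dw_k\,d\bar w_k)$, $I(z,w)=(iz,-iw)$, $S(z,w)=(w,z)$, $T=IS$, $\omega_A(Y,Z)=g(Y,AZ)$; $\mathbb T^d$ acts by $(z_k,w_k)\mapsto(e^{i\theta_k}z_k,e^{i\theta_k}w_k)$. Fix $u_1,\dots,u_d\in\mathbb Z^n$ spanning $\mathbb R^n$; $\beta\colon e_k\mapsto u_k$; $\mathfrak n=\ker\beta$ with inclusion $\iota$; $N\subset\mathbb T^d$ the kernel of the induced map $\mathbb T^d\to\mathbb T^n$. Identify $\mathbb R^d$ with its dual. Fix real $\lambda^{(j)}_k$, $\lambda^{(c)}_k=\lambda^{(2)}_k+i\lambda^{(3)}_k$; $\mu_I(z,w)=\sum_k(\tfrac12(|z_k|^2+|w_k|^2)+\lambda^{(1)}_k)\iota^*e_k$, $(\mu_S+i\mu_T)(z,w)=\sum_k(iz_k\bar w_k+\lambda^{(c)}_k)\iota^*e_k$; $M=\mu^{-1}(0)/N$, with induced forms $\omega'_A$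 ($\pi^*\omega'_A=\omega_A|_{\mu^{-1}(0)}$) on its smooth part. $\phi([z,w])=(a,b)$ with $\langle a,u_k\rangle=\tfrac12(|z_k|^2+|w_k|^2)+\lambda^{(1)}_k$, $\langle b,u_k\rangle=iz_k\bar w_k+\lambda^{(c)}_k$; $a_k=\langle a,u_k\rangle-\lambda^{(1)}_k$, $b_k=\langle b,u_k\rangle-\lambda^{(c)}_k$; $K=\{a_k\geqslant|b_k|\ \forall k\}$; $W_k=\{a_k=|b_k|\}$. $\hat\sigma$ is the involution of $M$ induced by $\sigma(z,w)=(\bar w,\bar z)$ and $M_{\hat\sigma}$ its fixed-point set. Condition (D) at $p$: $\mathcal N_p\cap\mathcal N_p^\perp=\{0\}$ with $\mathcal N$ the span of the vector fields induced by $\mathfrak n$. Condition (S): at no $p\in\mu^{-1}(0)$ is there nonzero $(X_1,X_2,X_3)\in\mathfrak n^3$ with $(IX_1+SX_2+TX_3)_p=0$. *)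

theory Defs
  imports Complex_Main
begin

text \<open>Points (and tangent vectors) of C^{d,d} = C^d x C^d are pairs (z,w) of
  coordinate functions nat => complex; only indices k < d are meaningful, and the
  carrier Cdd d requires the coordinates with index >= d to vanish.
  The integer vectors u_1..u_d in Z^n are given by u :: nat => nat => int,
  u k j being the j-th coordinate of u_k (k < d, j < n).  Indices start at 0.\<close>

type_synonym pt = "(nat \<Rightarrow> complex) \<times> (nat \<Rightarrow> complex)"

definition Cdd :: "nat \<Rightarrow> pt set" where
  "Cdd d = {(z, w). \<forall>k\<ge>d. z k = 0 \<and> w k = 0}"

definition gmet :: "nat \<Rightarrow> pt \<Rightarrow> pt \<Rightarrow> real" where
  "gmet d Y Z = Re (\<Sum>k<d. fst Y k * cnj (fst Z k) - snd Y k * cnj (snd Z k))"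

definition padd :: "pt \<Rightarrow> pt \<Rightarrow> pt" where
  "padd Y Z = (\<lambda>k. fst Y k + fst Z k, \<lambda>k. snd Y k + snd Z k)"

definition Iop :: "pt \<Rightarrow> pt" where
  "Iop Y = (\<lambda>k. \<i> * fst Y k, \<lambda>k. - \<i> * snd Y k)"

definition Sop :: "pt \<Rightarrow> pt" where
  "Sop Y = (snd Y, fst Y)"

definition Top :: "pt \<Rightarrow> pt" where
  "Top Y = Iop (Sop Y)"

definition omega :: "nat \<Rightarrow> (pt \<Rightarrow> pt) \<Rightarrow> pt \<Rightarrow> pt \<Rightarrow> real" where
  "omega d A Y Z = gmet d Y (A Z)"

definition spans :: "nat \<Rightarrow> nat \<Rightarrow> (nat \<Rightarrow> nat \<Rightarrow> int) \<Rightarrow> bool" where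
  "spans d n u \<longleftrightarrow> (\<forall>y :: nat \<Rightarrow> real. \<exists>c :: nat \<Rightarrow> real.
      \<forall>j<n. (\<Sum>k<d. c k * of_int (u k j)) = y j)"

text \<open>The Lie algebra n = ker beta inside R^d.\<close>
definition nfrak :: "nat \<Rightarrow> nat \<Rightarrow> (nat \<Rightarrow> nat \<Rightarrow> int) \<Rightarrow> (nat \<Rightarrow> real) set" where
  "nfrak d n u = {\<xi>. (\<forall>k\<ge>d. \<xi> k = 0) \<and> (\<forall>j<n. (\<Sum>k<d. \<xi> k * of_int (u k j)) = 0)}"

definition Ngrp :: "nat \<Rightarrow> nat \<Rightarrow> (nat \<Rightarrow> nat \<Rightarrow> int) \<Rightarrow> (nat \<Rightarrow> complex) set" where
  "Ngrp d n u = {t. (\<forall>k. cmod (t k) = 1) \<and> (\<forall>k\<ge>d. t k = 1) \<and>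
      (\<forall>j<n. (\<Prod>k<d. t k powi u k j) = 1)}"

definition act :: "(nat \<Rightarrow> complex) \<Rightarrow> pt \<Rightarrow> pt" where
  "act t p = (\<lambda>k. t k * fst p k, \<lambda>k. t k * snd p k)"

definition Xf :: "(nat \<Rightarrow> real) \<Rightarrow> pt \<Rightarrow> pt" where
  "Xf \<xi> p = (\<lambda>k. \<i> * of_real (\<xi> k) * fst p k, \<lambda>k. \<i> * of_real (\<xi> k) * snd p k)"

text \<open>Moment maps paired with xi in n (so mu(p) = 0 in n^* iff the pairing vanishes on n).\<close>
definition muI :: "nat \<Rightarrow> (nat \<Rightarrow> real) \<Rightarrow> pt \<Rightarrow> (nat \<Rightarrow> real) \<Rightarrow> real" where
  "muI d lam1 p \<xi> = (\<Sum>k<d. ((cmod (fst p k))\<^sup>2 + (cmod (snd p k))\<^sup>2) / 2 * \<xi> k + lam1 k * \<xi> k)"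

definition muC :: "nat \<Rightarrow> (nat \<Rightarrow> complex) \<Rightarrow> pt \<Rightarrow> (nat \<Rightarrow> real) \<Rightarrow> complex" where
  "muC d lamc p \<xi> = (\<Sum>k<d. (\<i> * fst p k * cnj (snd p k) + lamc k) * of_real (\<xi> k))"

definition mu0 :: "nat \<Rightarrow> nat \<Rightarrow> (nat \<Rightarrow> nat \<Rightarrow> int) \<Rightarrow> (nat \<Rightarrow> real) \<Rightarrow> (nat \<Rightarrow> real)
    \<Rightarrow> (nat \<Rightarrow> real) \<Rightarrow> pt set" where
  "mu0 d n u lam1 lam2 lam3 = {p \<in> Cdd d. \<forall>\<xi>\<in>nfrak d n u.
      muI d lam1 p \<xi> = 0 \<and> muC d (\<lambda>k. complex_of_real (lam2 k) + \<i> * complex_of_real (lam3 k)) p \<xi> = 0}"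

definition dmuI :: "nat \<Rightarrow> pt \<Rightarrow> pt \<Rightarrow> (nat \<Rightarrow> real) \<Rightarrow> real" where
  "dmuI d p v \<xi> = (\<Sum>k<d. Re (fst p k * cnj (fst v k) + snd p k * cnj (snd v k)) * \<xi> k)"

definition dmuC :: "nat \<Rightarrow> pt \<Rightarrow> pt \<Rightarrow> (nat \<Rightarrow> real) \<Rightarrow> complex" where
  "dmuC d p v \<xi> = (\<Sum>k<d. \<i> * (fst v k * cnj (snd p k) + fst p k * cnj (snd v k)) * of_real (\<xi> k))"

definition Nsp :: "nat \<Rightarrow> nat \<Rightarrow> (nat \<Rightarrow> nat \<Rightarrow> int) \<Rightarrow> pt \<Rightarrow> pt set" where
  "Nsp d n u p = (\<lambda>\<xi>. Xf \<xi> p) ` nfrak d n u"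

definition Nperp :: "nat \<Rightarrow> nat \<Rightarrow> (nat \<Rightarrow> nat \<Rightarrow> int) \<Rightarrow> pt \<Rightarrow> pt set" where
  "Nperp d n u p = {v \<in> Cdd d. \<forall>Y\<in>Nsp d n u p. gmet d Y v = 0}"

definition condD :: "nat \<Rightarrow> nat \<Rightarrow> (nat \<Rightarrow> nat \<Rightarrow> int) \<Rightarrow> pt \<Rightarrow> bool" where
  "condD d n u p \<longleftrightarrow> Nsp d n u p \<inter> Nperp d n u p = {((\<lambda>_. 0), (\<lambda>_. 0))}"

definition condS :: "nat \<Rightarrow> nat \<Rightarrow> (nat \<Rightarrow> nat \<Rightarrow> int) \<Rightarrow> pt set \<Rightarrow> bool" where
  "condS d n u Z \<longleftrightarrow> (\<forall>p\<in>Z. \<forall>\<xi>1\<in>nfrak d n u. \<forall>\<xi>2\<in>nfrak d n u. \<forall>\<xi>3\<in>nfrak d n u.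
      padd (Iop (Xf \<xi>1 p)) (padd (Sop (Xf \<xi>2 p)) (Top (Xf \<xi>3 p))) = ((\<lambda>_. 0), (\<lambda>_. 0))
      \<longrightarrow> \<xi>1 = (\<lambda>_. 0) \<and> \<xi>2 = (\<lambda>_. 0) \<and> \<xi>3 = (\<lambda>_. 0))"

text \<open>The involution sigma and the points of mu^{-1}(0) lying over M_sigma^hat:
  [p] is fixed by sigma^hat iff sigma(p) is in the N-orbit of p.\<close>
definition sigma :: "pt \<Rightarrow> pt" where
  "sigma p = (\<lambda>k. cnj (snd p k), \<lambda>k. cnj (fst p k))"

definition over_fixed :: "nat \<Rightarrow> nat \<Rightarrow> (nat \<Rightarrow> nat \<Rightarrow> int) \<Rightarrow> pt \<Rightarrow> bool" where
  "over_fixed d n u p \<longleftrightarrow> (\<exists>t\<in>Ngrp d n u. sigma p = act t p)"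

definition acts_freely :: "nat \<Rightarrow> nat \<Rightarrow> (nat \<Rightarrow> nat \<Rightarrow> int) \<Rightarrow> pt set \<Rightarrow> bool" where
  "acts_freely d n u Z \<longleftrightarrow> (\<forall>p\<in>Z. \<forall>t\<in>Ngrp d n u. act t p = p \<longrightarrow> t = (\<lambda>_. 1))"

text \<open>0 is a regular value of mu = (mu_I, mu_S, mu_T) : C^{d,d} -> (n^*)^3 at every point of Z:
  every triple of elements of n^* (represented by vectors c_A in R^d) is attained by d mu_p.\<close>
definition regular_on :: "nat \<Rightarrow> nat \<Rightarrow> (nat \<Rightarrow> nat \<Rightarrow> int) \<Rightarrow> pt set \<Rightarrow> bool" where
  "regular_on d n u Z \<longleftrightarrow> (\<forall>p\<in>Z. \<forall>c1 c2 c3 :: nat \<Rightarrow> real. \<exists>v\<in>Cdd d. \<forall>\<xi>\<in>nfrak d n u.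
      dmuI d p v \<xi> = (\<Sum>k<d. c1 k * \<xi> k) \<and>
      Re (dmuC d p v \<xi>) = (\<Sum>k<d. c2 k * \<xi> k) \<and>
      Im (dmuC d p v \<xi>) = (\<Sum>k<d. c3 k * \<xi> k))"

text \<open>Tangent space T_p mu^{-1}(0) = ker d mu_p; T_[p] M = T_p mu^{-1}(0) / N_p.\<close>
definition Tsp :: "nat \<Rightarrow> nat \<Rightarrow> (nat \<Rightarrow> nat \<Rightarrow> int) \<Rightarrow> pt \<Rightarrow> pt set" where
  "Tsp d n u p = {v \<in> Cdd d. \<forall>\<xi>\<in>nfrak d n u. dmuI d p v \<xi> = 0 \<and> dmuC d p v \<xi> = 0}"

text \<open>The induced form omega'_A (pi^* omega'_A = omega_A restricted) is degenerate at [p]: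
  some nonzero class v mod N_p in T_p mu^{-1}(0)/N_p is omega_A-orthogonal to everything.\<close>
definition induced_degenerate :: "nat \<Rightarrow> nat \<Rightarrow> (nat \<Rightarrow> nat \<Rightarrow> int) \<Rightarrow> (pt \<Rightarrow> pt) \<Rightarrow> pt \<Rightarrow> bool" where
  "induced_degenerate d n u A p \<longleftrightarrow> (\<exists>v\<in>Tsp d n u p. v \<notin> Nsp d n u p \<and>
      (\<forall>w\<in>Tsp d n u p. omega d A v w = 0))"

end

theory Submission
  imports Defs "HOL-Library.Indicator_Function"
begin

text \<open>If the class of \<open>p \<in> \<mu>\<inverse>(0)\<close> is fixed by \<open>\<sigma>\<close>, then \<open>\<sigma>(p) = t p\<close> with \<open>|t\<^sub>k| = 1\<close>, so
  \<open>|z\<^sub>k| = |w\<^sub>k|\<close> for every \<open>k\<close>. Everything follows from this: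
  \<^item> the moment map equations give \<open>a\<^sub>k = (|z\<^sub>k|\<^sup>2 + |w\<^sub>k|\<^sup>2)/2 = |z\<^sub>k w\<^sub>k| = |b\<^sub>k|\<close>, so
    \<open>\<phi>[p]\<close> lies on every wall (such \<open>a, b\<close> exist because a vector annihilating \<open>\<nn>\<close> lies in the
    image of \<open>\<beta>\<^sup>T\<close>);
  \<^item> \<open>g(X\<^sub>\<eta>, X\<^sub>\<xi>) = \<Sum>\<^sub>k \<eta>\<^sub>k \<xi>\<^sub>k (|z\<^sub>k|\<^sup>2 - |w\<^sub>k|\<^sup>2) = 0\<close>, so \<open>\<N>\<^sub>p\<close> is isotropic and (D) fails;
  \<^item> for \<open>0 \<noteq> \<xi> \<in> \<nn>\<close> (which exists when \<open>n < d\<close>) the vectors \<open>I X\<^sub>\<xi>\<close> and \<open>T X\<^sub>\<xi>\<close> are tangent to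
    \<open>\<mu>\<inverse>(0)\<close>, are not in \<open>\<N>\<^sub>p\<close> by (S), and by the moment map equations are
    \<open>\<omega>\<^sub>I\<close>-, resp. \<open>\<omega>\<^sub>S\<close>- and \<open>\<omega>\<^sub>T\<close>-orthogonal to the tangent space.
  Regularity of \<open>0\<close> is independent of the fixed points: with respect to the nondegenerate \<open>g\<close>,
  \<open>d\<mu>\<^sub>p\<close> is adjoint to \<open>(\<xi>\<^sub>1, \<xi>\<^sub>2, \<xi>\<^sub>3) \<mapsto> I X\<^sub>\<xi>\<^sub>1 + S X\<^sub>\<xi>\<^sub>2 + T X\<^sub>\<xi>\<^sub>3\<close>, which (S) makes
  injective, so \<open>d\<mu>\<^sub>p\<close> is onto \<open>(\<nn>\<^sup>*)\<^sup>3\<close> by the Fredholm alternative.\<close>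

text \<open>Subtracting \<open>m i\<close> times row \<open>r\<close> from each row \<open>i \<in> R\<close>: a left-kernel vector \<open>\<eta>\<close> of the
  reduced system, extended by \<open>-(\<Sum>i\<in>R. \<eta> i * m i)\<close> at \<open>r\<close>, is one of the original system.\<close>

lemma sum_eliminate_row:
  fixes \<eta> m f :: "'r \<Rightarrow> real"
  assumes "finite R" "r \<notin> R"
  shows "(\<Sum>i\<in>insert r R. (\<eta>(r := - (\<Sum>i\<in>R. \<eta> i * m i))) i * f i)
       = (\<Sum>i\<in>R. \<eta> i * (f i - m i * f r))"
proof -
  have "(\<Sum>i\<in>R. (\<eta>(r := c)) i * f i) = (\<Sum>i\<in>R. \<eta> i * f i)" for c
    using assms(2) by (intro sum.cong) auto
  with assms show ?thesis
    by (simp add: sum_subtractf sum_distrib_left algebra_simps)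
qed

lemma solvable_if_orthogonal_to_left_kernel:
  fixes A :: "'r \<Rightarrow> 'c \<Rightarrow> real" and y :: "'r \<Rightarrow> real"
  assumes "finite R" "finite C"
    and "\<And>\<eta>. \<forall>j\<in>C. (\<Sum>i\<in>R. \<eta> i * A i j) = 0 \<Longrightarrow> (\<Sum>i\<in>R. \<eta> i * y i) = 0"
  shows "\<exists>x. \<forall>i\<in>R. (\<Sum>j\<in>C. A i j * x j) = y i"
  using assms(1,3)
proof (induction R arbitrary: A y rule: finite_induct)
  case empty
  then show ?case by simp
next
  case (insert r R)
  have reduced: "\<exists>x. \<forall>i\<in>R. (\<Sum>j\<in>C. (A i j - m i * A r j) * x j) = y i - m i * y r" for m
  proof (rule insert.IH)
    fix \<eta> assume "\<forall>j\<in>C. (\<Sum>i\<in>R. \<eta> i * (A i j - m i * A r j)) = 0"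
    then show "(\<Sum>i\<in>R. \<eta> i * (y i - m i * y r)) = 0"
      using insert.prems[of "\<eta>(r := - (\<Sum>i\<in>R. \<eta> i * m i))"]
      by (simp only: sum_eliminate_row[OF insert.hyps])
  qed
  have row_eq: "(\<Sum>j\<in>C. A i j * x j) = (\<Sum>j\<in>C. (A i j - m i * A r j) * x j) + m i * (\<Sum>j\<in>C. A r j * x j)"
    for i m x by (simp add: algebra_simps sum_subtractf sum_distrib_left)
  consider (zero_row) "\<forall>j\<in>C. A r j = 0" | (pivot) j0 where "j0 \<in> C" "A r j0 \<noteq> 0" by blast
  then show ?case
  proof cases
    case zero_row
    have "(\<Sum>i\<in>R. ((\<lambda>_. 0)(r := 1)) i * g i) = 0" for g :: "'r \<Rightarrow> real"
      using insert.hyps(2) by (intro sum.neutral) auto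
    then have "y r = 0"
      using insert.prems[of "(\<lambda>_. 0)(r := 1)"] zero_row insert.hyps by simp
    moreover obtain x where "\<forall>i\<in>R. (\<Sum>j\<in>C. A i j * x j) = y i"
      using reduced[of "\<lambda>_. 0"] by auto
    ultimately show ?thesis using zero_row by auto
  next
    case pivot
    define m where "m i = A i j0 / A r j0" for i
    obtain x where x: "\<forall>i\<in>R. (\<Sum>j\<in>C. (A i j - m i * A r j) * x j) = y i - m i * y r"
      using reduced by blast
    define x' where "x' = x(j0 := x j0 + (y r - (\<Sum>j\<in>C. A r j * x j)) / A r j0)"
    have shift: "(\<Sum>j\<in>C. B j * x' j) = (\<Sum>j\<in>C. B j * x j) + B j0 * ((y r - (\<Sum>j\<in>C. A r j * x j)) / A r j0)"
      for B using pivot(1) assms(2)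
      by (simp add: x'_def sum.remove[of C j0] algebra_simps)
    have pivot_col: "A i j0 - m i * A r j0 = 0" for i
      using pivot(2) by (simp add: m_def)
    have "(\<Sum>j\<in>C. A r j * x' j) = y r"
      using shift[of "A r"] pivot(2) by simp
    moreover have "(\<Sum>j\<in>C. A i j * x' j) = y i" if "i \<in> R" for i
      using row_eq[where i = i and m = m and x = x'] shift[of "\<lambda>j. A i j - m i * A r j"] pivot_col[of i] x that
        \<open>(\<Sum>j\<in>C. A r j * x' j) = y r\<close> by simp
    ultimately show ?thesis by auto
  qed
qed

lemma solvable_modulo_if_orthogonal_to_left_kernel:
  fixes A :: "'r \<Rightarrow> 'c \<Rightarrow> real" and B :: "'r \<Rightarrow> 'e \<Rightarrow> real"
  assumes "finite R" "finite C" "finite D"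
    and "\<And>\<eta>. \<forall>j\<in>C. (\<Sum>i\<in>R. \<eta> i * A i j) = 0 \<Longrightarrow> \<forall>e\<in>D. (\<Sum>i\<in>R. \<eta> i * B i e) = 0
      \<Longrightarrow> (\<Sum>i\<in>R. \<eta> i * y i) = 0"
  shows "\<exists>x a. \<forall>i\<in>R. (\<Sum>j\<in>C. A i j * x j) = y i + (\<Sum>e\<in>D. B i e * a e)"
proof -
  define AB where "AB i = case_sum (A i) (\<lambda>e. - B i e)" for i
  have "\<exists>z. \<forall>i\<in>R. (\<Sum>j\<in>C <+> D. AB i j * z j) = y i"
  proof (rule solvable_if_orthogonal_to_left_kernel)
    fix \<eta> assume h: "\<forall>j\<in>C <+> D. (\<Sum>i\<in>R. \<eta> i * AB i j) = 0"
    have "\<forall>j\<in>C. (\<Sum>i\<in>R. \<eta> i * A i j) = 0"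
      using h by (auto simp: AB_def dest: bspec[where x = "Inl _"])
    moreover have "\<forall>e\<in>D. (\<Sum>i\<in>R. \<eta> i * B i e) = 0"
      using h by (auto simp: AB_def sum_negf dest: bspec[where x = "Inr _"])
    ultimately show "(\<Sum>i\<in>R. \<eta> i * y i) = 0" by (rule assms(4))
  qed (use assms in auto)
  then obtain z where "\<forall>i\<in>R. (\<Sum>j\<in>C <+> D. AB i j * z j) = y i" ..
  then have "\<forall>i\<in>R. (\<Sum>j\<in>C. A i j * z (Inl j)) = y i + (\<Sum>e\<in>D. B i e * z (Inr e))"
    using assms(2,3) by (simp add: sum.Plus AB_def sum_negf diff_eq_eq)
  then show ?thesis by (intro exI[of _ "z \<circ> Inl"] exI[of _ "z \<circ> Inr"]) simp
qed

lemma nonzero_solution_if_card_less: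
  fixes A :: "'r \<Rightarrow> 'c \<Rightarrow> real"
  assumes "finite R" "finite C" "card R < card C"
  shows "\<exists>x. (\<exists>j\<in>C. x j \<noteq> 0) \<and> (\<forall>i\<in>R. (\<Sum>j\<in>C. A i j * x j) = 0)"
  using assms
proof (induction R arbitrary: A C rule: finite_induct)
  case empty
  then obtain j where "j \<in> C" by fastforce
  then show ?case by (intro exI[of _ "\<lambda>_. 1"]) auto
next
  case (insert r R)
  consider (zero_row) "\<forall>j\<in>C. A r j = 0" | (pivot) j0 where "j0 \<in> C" "A r j0 \<noteq> 0" by blast
  then show ?case
  proof cases
    case zero_row
    then show ?thesis using insert by fastforce
  next
    case pivot
    define m where "m i = A i j0 / A r j0" for i
    have "card R < card (C - {j0})" using insert pivot(1) by simp
    then obtain x where x: "\<exists>j\<in>C - {j0}. x j \<noteq> 0"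
      "\<forall>i\<in>R. (\<Sum>j\<in>C - {j0}. (A i j - m i * A r j) * x j) = 0"
      using insert.IH[where C = "C - {j0}" and A = "\<lambda>i j. A i j - m i * A r j"] insert.prems(1) by blast
    define x' where "x' = x(j0 := - (\<Sum>j\<in>C - {j0}. A r j * x j) / A r j0)"
    have split: "(\<Sum>j\<in>C. B j * x' j) = B j0 * x' j0 + (\<Sum>j\<in>C - {j0}. B j * x j)" for B
      using pivot(1) insert.prems(1) by (simp add: x'_def sum.remove)
    have row_r: "(\<Sum>j\<in>C. A r j * x' j) = 0"
      using split[of "A r"] pivot(2) by (simp add: x'_def)
    have "(\<Sum>j\<in>C. A i j * x' j) = 0" if "i \<in> R" for i
    proof -
      have "(\<Sum>j\<in>C. A i j * x' j) = m i * (\<Sum>j\<in>C. A r j * x' j)"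
        using split[of "A i"] split[of "A r"] x(2) that pivot(2)
        by (simp add: m_def algebra_simps sum_subtractf sum_distrib_left)
      then show ?thesis using row_r by simp
    qed
    moreover have "\<exists>j\<in>C. x' j \<noteq> 0" using x(1) by (auto simp: x'_def)
    ultimately show ?thesis using row_r by auto
  qed
qed

lemma sum_block_diagonal:
  fixes g :: "nat \<times> 'a \<Rightarrow> real"
  assumes "s < m"
  shows "(\<Sum>e\<in>{..<m} \<times> J. g e * (if fst e = s then h (snd e) else 0)) = (\<Sum>j\<in>J. g (s, j) * h j)"
proof -
  have "(\<Sum>e\<in>{..<m} \<times> J. g e * (if fst e = s then h (snd e) else 0))
      = (\<Sum>t<m. if t = s then (\<Sum>j\<in>J. g (s, j) * h j) else 0)"
    unfolding sum.cartesian_product' by (intro sum.cong) auto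
  also have "\<dots> = (\<Sum>j\<in>J. g (s, j) * h j)"
    using assms by simp
  finally show ?thesis .
qed

text \<open>The block-diagonal matrix \<open>diag(\<beta>\<^sup>T, \<dots>, \<beta>\<^sup>T)\<close>, rows and columns indexed by (block, index).\<close>

definition beta_block :: "(nat \<Rightarrow> nat \<Rightarrow> int) \<Rightarrow> nat \<times> nat \<Rightarrow> nat \<times> nat \<Rightarrow> real" where
  "beta_block u r e = (if fst r = fst e then of_int (u (snd r) (snd e)) else 0)"

lemma sum_beta_block_row:
  assumes "s < m"
  shows "(\<Sum>e\<in>{..<m} \<times> J. beta_block u (s, k) e * a e) = (\<Sum>j\<in>J. a (s, j) * of_int (u k j))"
proof -
  have "(\<Sum>e\<in>{..<m} \<times> J. beta_block u (s, k) e * a e)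
      = (\<Sum>e\<in>{..<m} \<times> J. a e * (if fst e = s then of_int (u k (snd e)) else 0))"
    by (intro sum.cong) (auto simp: beta_block_def)
  also have "\<dots> = (\<Sum>j\<in>J. a (s, j) * of_int (u k j))"
    by (rule sum_block_diagonal[OF assms])
  finally show ?thesis .
qed

lemma sum_beta_block_col:
  assumes "s < m"
  shows "(\<Sum>r\<in>{..<m} \<times> K. \<eta> r * beta_block u r (s, j)) = (\<Sum>k\<in>K. \<eta> (s, k) * of_int (u k j))"
  using sum_block_diagonal[OF assms, where g = \<eta> and h = "\<lambda>k. of_int (u k j)" and J = K]
  by (simp only: beta_block_def fst_conv snd_conv)

lemma orthogonal_nfrak_imp_combination:
  fixes y :: "nat \<Rightarrow> real"
  assumes "\<forall>\<xi>\<in>nfrak d n u. (\<Sum>k<d. y k * \<xi> k) = 0"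
  shows "\<exists>a. \<forall>k<d. (\<Sum>j<n. a j * of_int (u k j)) = y k"
proof -
  have "\<exists>a. \<forall>k\<in>{..<d}. (\<Sum>j\<in>{..<n}. of_int (u k j) * a j) = y k"
  proof (rule solvable_if_orthogonal_to_left_kernel)
    fix \<eta> :: "nat \<Rightarrow> real"
    assume "\<forall>j\<in>{..<n}. (\<Sum>k\<in>{..<d}. \<eta> k * of_int (u k j)) = 0"
    then have "(\<lambda>k. if k < d then \<eta> k else 0) \<in> nfrak d n u"
      by (simp add: nfrak_def if_distrib[of "\<lambda>x. x * _"] sum.If_cases)
    then show "(\<Sum>k\<in>{..<d}. \<eta> k * y k) = 0"
      using assms by (force simp: mult.commute)
  qed simp_all
  then show ?thesis by (auto simp: mult.commute)
qed

lemma combination_orthogonal_nfrak: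
  assumes "\<xi> \<in> nfrak d n u"
  shows "(\<Sum>k<d. (\<Sum>j<n. a j * of_int (u k j)) * \<xi> k) = 0"
proof -
  have "(\<Sum>k<d. (\<Sum>j<n. a j * of_int (u k j)) * \<xi> k) = (\<Sum>j<n. a j * (\<Sum>k<d. \<xi> k * of_int (u k j)))"
    by (simp add: sum_distrib_left sum_distrib_right sum.swap[of _ "{..<n}"] algebra_simps)
  then show ?thesis using assms by (simp add: nfrak_def)
qed

lemma nfrak_nontrivial:
  assumes "n < d"
  shows "\<exists>\<xi>\<in>nfrak d n u. \<xi> \<noteq> (\<lambda>_. 0)"
proof -
  obtain x :: "nat \<Rightarrow> real" where x: "\<exists>k\<in>{..<d}. x k \<noteq> 0"
    "\<forall>j\<in>{..<n}. (\<Sum>k\<in>{..<d}. of_int (u k j) * x k) = 0"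
    using nonzero_solution_if_card_less[of "{..<n}" "{..<d}" "\<lambda>j k. of_int (u k j)"] assms by auto
  define \<xi> where "\<xi> k = (if k < d then x k else 0)" for k
  have "\<xi> \<in> nfrak d n u"
    using x(2) by (simp add: nfrak_def \<xi>_def mult.commute)
  moreover have "\<xi> \<noteq> (\<lambda>_. 0)"
    using x(1) by (auto simp: \<xi>_def fun_eq_iff)
  ultimately show ?thesis by blast
qed

abbreviation zero_pt :: pt where
  "zero_pt \<equiv> ((\<lambda>_. 0), (\<lambda>_. 0))"

lemma condS_D:
  assumes "condS d n u Z" "p \<in> Z" "\<xi>1 \<in> nfrak d n u" "\<xi>2 \<in> nfrak d n u" "\<xi>3 \<in> nfrak d n u"
    and "padd (Iop (Xf \<xi>1 p)) (padd (Sop (Xf \<xi>2 p)) (Top (Xf \<xi>3 p))) = zero_pt"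
  shows "\<xi>1 = (\<lambda>_. 0) \<and> \<xi>2 = (\<lambda>_. 0) \<and> \<xi>3 = (\<lambda>_. 0)"
  using assms unfolding condS_def by blast

lemma Xf_in_Cdd: "\<xi> \<in> nfrak d n u \<Longrightarrow> Xf \<xi> p \<in> Cdd d"
  by (auto simp: Cdd_def Xf_def nfrak_def)

lemma gmet_Xf_Xf:
  "gmet d (Xf \<eta> p) (Xf \<xi> p) = (\<Sum>k<d. \<eta> k * \<xi> k * ((cmod (fst p k))\<^sup>2 - (cmod (snd p k))\<^sup>2))"
  unfolding gmet_def Xf_def Re_sum cmod_power2
  by (intro sum.cong) (simp_all add: power2_eq_square algebra_simps)

lemma over_fixed_cmod_eq:
  assumes "over_fixed d n u p"
  shows "cmod (snd p k) = cmod (fst p k)"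
proof -
  obtain t where t: "t \<in> Ngrp d n u" "sigma p = act t p"
    using assms unfolding over_fixed_def by blast
  then have "cnj (snd p k) = t k * fst p k"
    by (metis act_def fst_conv sigma_def)
  moreover have "cmod (t k) = 1" using t(1) by (simp add: Ngrp_def)
  ultimately show ?thesis by (metis complex_mod_cnj mult_cancel_right2 norm_mult)
qed

lemma over_fixed_gmet_Xf_Xf:
  "over_fixed d n u p \<Longrightarrow> gmet d (Xf \<eta> p) (Xf \<xi> p) = 0"
  by (simp add: gmet_Xf_Xf over_fixed_cmod_eq)

lemma over_fixed_imp_in_K_on_all_walls:
  assumes "p \<in> mu0 d n u lam1 lam2 lam3" "over_fixed d n u p"
  defines "lamc k \<equiv> complex_of_real (lam2 k) + \<i> * complex_of_real (lam3 k)"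
  shows "\<exists>(a :: nat \<Rightarrow> real) (b :: nat \<Rightarrow> complex). \<forall>k<d.
    (\<Sum>j<n. a j * of_int (u k j)) - lam1 k \<ge> cmod ((\<Sum>j<n. b j * of_int (u k j)) - lamc k)
    \<and> (\<Sum>j<n. a j * of_int (u k j)) - lam1 k = cmod ((\<Sum>j<n. b j * of_int (u k j)) - lamc k)"
proof -
  define yI where "yI k = ((cmod (fst p k))\<^sup>2 + (cmod (snd p k))\<^sup>2) / 2 + lam1 k" for k
  define yC where "yC k = \<i> * fst p k * cnj (snd p k) + lamc k" for k
  have mu: "muI d lam1 p \<xi> = 0" "muC d lamc p \<xi> = 0" if "\<xi> \<in> nfrak d n u" for \<xi>
    using assms(1) that by (simp_all add: mu0_def lamc_def[abs_def])
  have "\<forall>\<xi>\<in>nfrak d n u. (\<Sum>k<d. yI k * \<xi> k) = 0"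
    using mu(1) by (simp add: muI_def yI_def algebra_simps)
  then obtain a where a: "\<forall>k<d. (\<Sum>j<n. a j * of_int (u k j)) = yI k"
    using orthogonal_nfrak_imp_combination by blast
  have yC_orth: "(\<Sum>k<d. Re (yC k) * \<xi> k) = 0 \<and> (\<Sum>k<d. Im (yC k) * \<xi> k) = 0"
    if "\<xi> \<in> nfrak d n u" for \<xi>
    using arg_cong[OF mu(2)[OF that], of Re] arg_cong[OF mu(2)[OF that], of Im]
    by (simp add: muC_def yC_def)
  obtain bR where bR: "\<forall>k<d. (\<Sum>j<n. bR j * of_int (u k j)) = Re (yC k)"
    using orthogonal_nfrak_imp_combination[of d n u "\<lambda>k. Re (yC k)"] yC_orth by blast
  obtain bI where bI: "\<forall>k<d. (\<Sum>j<n. bI j * of_int (u k j)) = Im (yC k)"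
    using orthogonal_nfrak_imp_combination[of d n u "\<lambda>k. Im (yC k)"] yC_orth by blast
  show ?thesis
  proof (intro exI allI impI)
    fix k assume "k < d"
    then have "(\<Sum>j<n. Complex (bR j) (bI j) * of_int (u k j)) = yC k"
      using bR bI by (simp add: complex_eq_iff)
    moreover have "cmod (snd p k) = cmod (fst p k)"
      using assms(2) by (rule over_fixed_cmod_eq)
    ultimately have "(\<Sum>j<n. a j * of_int (u k j)) - lam1 k
      = cmod ((\<Sum>j<n. Complex (bR j) (bI j) * of_int (u k j)) - lamc k)"
      using a \<open>k < d\<close> by (simp add: yI_def yC_def norm_mult power2_eq_square)
    then show "(\<Sum>j<n. a j * of_int (u k j)) - lam1 k
        \<ge> cmod ((\<Sum>j<n. Complex (bR j) (bI j) * of_int (u k j)) - lamc k)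
      \<and> (\<Sum>j<n. a j * of_int (u k j)) - lam1 k
        = cmod ((\<Sum>j<n. Complex (bR j) (bI j) * of_int (u k j)) - lamc k)" by simp
  qed
qed

lemma over_fixed_Nsp_subset_Nperp:
  "over_fixed d n u p \<Longrightarrow> Nsp d n u p \<subseteq> Nperp d n u p"
  by (auto simp: Nsp_def Nperp_def Xf_in_Cdd over_fixed_gmet_Xf_Xf)

lemma over_fixed_not_condD:
  assumes "over_fixed d n u p" "Nsp d n u p \<noteq> {zero_pt}"
  shows "\<not> condD d n u p"
  using over_fixed_Nsp_subset_Nperp[OF assms(1)] assms(2)
  by (simp add: condD_def Int_absorb2)

text \<open>The pairing of the \<open>s\<close>-th component of \<open>d\<mu>\<^sub>p v\<close> (\<open>s = 0, 1, 2\<close> for \<open>I, S, T\<close>) with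
  \<open>\<xi>\<close> is \<open>\<Sum>k<d. dmu_coef p s v k * \<xi> k\<close>.\<close>

definition dmu_coef :: "pt \<Rightarrow> nat \<Rightarrow> pt \<Rightarrow> nat \<Rightarrow> real" where
  "dmu_coef p s v k =
    (if s = 0 then Re (fst p k * cnj (fst v k) + snd p k * cnj (snd v k))
     else if s = 1 then Re (\<i> * (fst v k * cnj (snd p k) + fst p k * cnj (snd v k)))
     else Im (\<i> * (fst v k * cnj (snd p k) + fst p k * cnj (snd v k))))"

lemma dmu_eq_sum_dmu_coef:
  "dmuI d p v \<xi> = (\<Sum>k<d. dmu_coef p 0 v k * \<xi> k)"
  "Re (dmuC d p v \<xi>) = (\<Sum>k<d. dmu_coef p 1 v k * \<xi> k)"
  "Im (dmuC d p v \<xi>) = (\<Sum>k<d. dmu_coef p 2 v k * \<xi> k)"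
  by (simp_all add: dmuI_def dmuC_def dmu_coef_def)

lemma dmu_adjoint:
  "dmuI d p v \<xi>0 + Re (dmuC d p v \<xi>1) + Im (dmuC d p v \<xi>2)
    = - gmet d v (padd (Iop (Xf \<xi>0 p)) (padd (Sop (Xf \<xi>1 p)) (Top (Xf \<xi>2 p))))"
  unfolding dmuI_def dmuC_def gmet_def Re_sum Im_sum sum.distrib[symmetric] sum_negf[symmetric]
  by (intro sum.cong) (simp_all add: padd_def Iop_def Sop_def Top_def Xf_def algebra_simps)

definition pt_of_coords :: "nat \<Rightarrow> (nat \<times> nat \<Rightarrow> real) \<Rightarrow> pt" where
  "pt_of_coords d x = (\<lambda>k. if k < d then Complex (x (0, k)) (x (1, k)) else 0,
                       \<lambda>k. if k < d then Complex (x (2, k)) (x (3, k)) else 0)"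

lemma pt_of_coords_in_Cdd: "pt_of_coords d x \<in> Cdd d"
  by (simp add: pt_of_coords_def Cdd_def)

lemma dmu_coef_pt_of_coords:
  "dmu_coef p s (pt_of_coords d x) k
    = (\<Sum>c\<in>{..<4} \<times> {..<d}. x c * dmu_coef p s (pt_of_coords d (indicator {c})) k)"
proof (cases "k < d")
  case True
  have "(\<Sum>c\<in>{..<4} \<times> {..<d}. x c * dmu_coef p s (pt_of_coords d (indicator {c})) k)
      = (\<Sum>t<4. \<Sum>k'<d. if k' = k then x (t, k) * dmu_coef p s (pt_of_coords d (indicator {(t, k)})) k else 0)"
    unfolding sum.cartesian_product'
    by (intro sum.cong refl) (auto simp: dmu_coef_def pt_of_coords_def split: split_indicator)
  also have "\<dots> = dmu_coef p s (pt_of_coords d x) k"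
    using True by (simp add: numeral_eq_Suc dmu_coef_def pt_of_coords_def algebra_simps split: split_indicator)
  finally show ?thesis ..
qed (simp add: dmu_coef_def pt_of_coords_def)

lemma gmet_pt_of_coords_indicator:
  assumes "k < d"
  shows "gmet d (pt_of_coords d (indicator {(t, k)})) W =
    (if t = 0 then Re (fst W k) else if t = 1 then Im (fst W k)
     else if t = 2 then - Re (snd W k) else if t = 3 then - Im (snd W k) else 0)"
proof -
  have "gmet d (pt_of_coords d (indicator {(t, k)})) W
      = (\<Sum>k'<d. if k' = k then Re (fst (pt_of_coords d (indicator {(t, k)})) k * cnj (fst W k)
           - snd (pt_of_coords d (indicator {(t, k)})) k * cnj (snd W k)) else 0)"
    unfolding gmet_def Re_sum by (intro sum.cong) (auto simp: pt_of_coords_def split: split_indicator)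
  then show ?thesis using assms by (simp add: pt_of_coords_def)
qed

lemma gmet_nondegenerate:
  assumes "W \<in> Cdd d" "\<forall>c\<in>{..<4} \<times> {..<d}. gmet d (pt_of_coords d (indicator {c})) W = 0"
  shows "W = zero_pt"
proof -
  have "fst W k = 0 \<and> snd W k = 0" for k
  proof (cases "k < d")
    case True
    have "gmet d (pt_of_coords d (indicator {(t, k)})) W = 0" if "t < (4::nat)" for t
      using assms(2) True that by simp
    from this[of 0] this[of 1] this[of 2] this[of 3] show ?thesis
      using True by (simp add: gmet_pt_of_coords_indicator complex_eq_iff)
  qed (use assms(1) in \<open>auto simp: Cdd_def\<close>)
  then show ?thesis by (simp add: prod_eq_iff fun_eq_iff)
qed

lemma sum_rows_dmu_coef:
  fixes d :: nat and \<eta> :: "nat \<times> nat \<Rightarrow> real"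
  defines "\<xi> s k \<equiv> if k < d then \<eta> (s, k) else 0"
  shows "(\<Sum>r\<in>{..<3} \<times> {..<d}. \<eta> r * dmu_coef p (fst r) v (snd r))
    = dmuI d p v (\<xi> 0) + Re (dmuC d p v (\<xi> 1)) + Im (dmuC d p v (\<xi> 2))"
  unfolding dmu_eq_sum_dmu_coef sum.cartesian_product'
  by (simp add: numeral_eq_Suc \<xi>_def mult.commute)

lemma condS_imp_dmu_cokernel_trivial:
  fixes \<eta> :: "nat \<times> nat \<Rightarrow> real"
  assumes S: "condS d n u Z" and p: "p \<in> Z"
    and rows: "\<And>s. s < 3 \<Longrightarrow> (\<lambda>k. if k < d then \<eta> (s, k) else 0) \<in> nfrak d n u"
    and cokernel: "\<forall>e\<in>{..<4} \<times> {..<d}.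
      (\<Sum>r\<in>{..<3} \<times> {..<d}. \<eta> r * dmu_coef p (fst r) (pt_of_coords d (indicator {e})) (snd r)) = 0"
  shows "\<forall>r\<in>{..<3} \<times> {..<d}. \<eta> r = 0"
proof -
  define \<xi> where "\<xi> s k = (if k < d then \<eta> (s, k) else 0)" for s k
  have nf: "\<xi> s \<in> nfrak d n u" if "s < 3" for s
    using rows[OF that] by (simp add: \<xi>_def[abs_def])
  define W where "W = padd (Iop (Xf (\<xi> 0) p)) (padd (Sop (Xf (\<xi> 1) p)) (Top (Xf (\<xi> 2) p)))"
  have "gmet d (pt_of_coords d (indicator {e})) W = 0" if "e \<in> {..<4} \<times> {..<d}" for e
  proof -
    have "dmuI d p (pt_of_coords d (indicator {e})) (\<xi> 0)
        + Re (dmuC d p (pt_of_coords d (indicator {e})) (\<xi> 1))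
        + Im (dmuC d p (pt_of_coords d (indicator {e})) (\<xi> 2)) = 0"
      using cokernel that by (simp only: sum_rows_dmu_coef \<xi>_def[abs_def])
    then show ?thesis by (simp add: dmu_adjoint W_def)
  qed
  moreover have "W \<in> Cdd d"
    by (simp add: W_def Cdd_def padd_def Iop_def Sop_def Top_def Xf_def \<xi>_def)
  ultimately have "W = zero_pt" by (simp add: gmet_nondegenerate)
  then have "\<xi> 0 = (\<lambda>_. 0) \<and> \<xi> 1 = (\<lambda>_. 0) \<and> \<xi> 2 = (\<lambda>_. 0)"
    unfolding W_def by (intro condS_D[OF S p nf nf nf]) simp_all
  then have \<xi>_zero: "\<xi> s k = 0" if "s < 3" for s k
    using that by (auto simp: numeral_eq_Suc less_Suc_eq)
  show ?thesis
  proof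
    fix r :: "nat \<times> nat" assume "r \<in> {..<3} \<times> {..<d}"
    then show "\<eta> r = 0" using \<xi>_zero[of "fst r" "snd r"] by (auto simp: \<xi>_def)
  qed
qed

lemma condS_imp_dmu_onto:
  fixes c1 c2 c3 :: "nat \<Rightarrow> real"
  assumes S: "condS d n u Z" and p: "p \<in> Z"
  shows "\<exists>v\<in>Cdd d. \<forall>\<xi>\<in>nfrak d n u.
      dmuI d p v \<xi> = (\<Sum>k<d. c1 k * \<xi> k) \<and>
      Re (dmuC d p v \<xi>) = (\<Sum>k<d. c2 k * \<xi> k) \<and>
      Im (dmuC d p v \<xi>) = (\<Sum>k<d. c3 k * \<xi> k)"
proof -
  define c where "c s = (if s = 0 then c1 else if s = 1 then c2 else c3)" for s :: nat
  define A where "A r e = dmu_coef p (fst r) (pt_of_coords d (indicator {e})) (snd r)" for r e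
  have "\<exists>x a. \<forall>r\<in>{..<3} \<times> {..<d}. (\<Sum>e\<in>{..<4} \<times> {..<d}. A r e * x e)
      = c (fst r) (snd r) + (\<Sum>e\<in>{..<3} \<times> {..<n}. beta_block u r e * a e)"
  proof (rule solvable_modulo_if_orthogonal_to_left_kernel)
    fix \<eta> :: "nat \<times> nat \<Rightarrow> real"
    assume hA: "\<forall>e\<in>{..<4} \<times> {..<d}. (\<Sum>r\<in>{..<3} \<times> {..<d}. \<eta> r * A r e) = 0"
      and hB: "\<forall>e\<in>{..<3} \<times> {..<n}. (\<Sum>r\<in>{..<3} \<times> {..<d}. \<eta> r * beta_block u r e) = 0"
    have "(\<lambda>k. if k < d then \<eta> (s, k) else 0) \<in> nfrak d n u" if "s < 3" for s
    proof -
      have "(\<Sum>k<d. \<eta> (s, k) * of_int (u k j)) = 0" if "j < n" for j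
        using bspec[OF hB, of "(s, j)"] \<open>s < 3\<close> that by (simp add: sum_beta_block_col)
      then show ?thesis by (simp add: nfrak_def if_distrib[of "\<lambda>x. x * _"] sum.If_cases)
    qed
    then have "\<forall>r\<in>{..<3} \<times> {..<d}. \<eta> r = 0"
      using condS_imp_dmu_cokernel_trivial[OF S p] hA by (simp add: A_def)
    then show "(\<Sum>r\<in>{..<3} \<times> {..<d}. \<eta> r * c (fst r) (snd r)) = 0"
      by (auto intro!: sum.neutral)
  qed simp_all
  then obtain x a where xa: "\<forall>r\<in>{..<3} \<times> {..<d}. (\<Sum>e\<in>{..<4} \<times> {..<d}. A r e * x e)
      = c (fst r) (snd r) + (\<Sum>e\<in>{..<3} \<times> {..<n}. beta_block u r e * a e)" by blast
  have coef: "dmu_coef p s (pt_of_coords d x) k = c s k + (\<Sum>j<n. a (s, j) * of_int (u k j))"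
    if "s < 3" "k < d" for s k
    using xa that sum_beta_block_row[OF that(1), where u = u and k = k and J = "{..<n}" and a = a]
    by (simp add: dmu_coef_pt_of_coords[of p s d x k] A_def mult.commute)
  have pairing: "(\<Sum>k<d. dmu_coef p s (pt_of_coords d x) k * \<xi> k) = (\<Sum>k<d. c s k * \<xi> k)"
    if "s < 3" "\<xi> \<in> nfrak d n u" for s \<xi>
    using combination_orthogonal_nfrak[OF that(2), of "\<lambda>j. a (s, j)"] coef[OF that(1)]
    by (simp add: distrib_right sum.distrib)
  show ?thesis
  proof (intro bexI[of _ "pt_of_coords d x"] ballI)
    fix \<xi> assume "\<xi> \<in> nfrak d n u"
    then show "dmuI d p (pt_of_coords d x) \<xi> = (\<Sum>k<d. c1 k * \<xi> k) \<and>
        Re (dmuC d p (pt_of_coords d x) \<xi>) = (\<Sum>k<d. c2 k * \<xi> k) \<and>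
        Im (dmuC d p (pt_of_coords d x) \<xi>) = (\<Sum>k<d. c3 k * \<xi> k)"
      using pairing[of 0 \<xi>] pairing[of 1 \<xi>] pairing[of 2 \<xi>]
      by (simp add: dmu_eq_sum_dmu_coef c_def)
  qed (rule pt_of_coords_in_Cdd)
qed

lemma condS_imp_regular_on: "condS d n u Z \<Longrightarrow> regular_on d n u Z"
  unfolding regular_on_def by (blast intro: condS_imp_dmu_onto)

lemma dmuI_Iop_Xf: "dmuI d p (Iop (Xf \<xi> p)) \<eta> = - gmet d (Xf \<eta> p) (Xf \<xi> p)"
  unfolding gmet_Xf_Xf unfolding dmuI_def cmod_power2 sum_negf[symmetric]
  by (intro sum.cong) (simp_all add: Iop_def Xf_def power2_eq_square algebra_simps)

lemma dmuC_Iop_Xf: "dmuC d p (Iop (Xf \<xi> p)) \<eta> = 0"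
  unfolding dmuC_def by (intro sum.neutral) (simp add: Iop_def Xf_def algebra_simps)

lemma dmuI_Top_Xf: "dmuI d p (Top (Xf \<xi> p)) \<eta> = 0"
  unfolding dmuI_def by (intro sum.neutral) (simp add: Top_def Sop_def Iop_def Xf_def algebra_simps)

lemma dmuC_Top_Xf: "dmuC d p (Top (Xf \<xi> p)) \<eta> = \<i> * gmet d (Xf \<eta> p) (Xf \<xi> p)"
  unfolding gmet_Xf_Xf unfolding dmuC_def sum_distrib_left of_real_sum cmod_power2
  by (intro sum.cong)
    (simp_all add: Top_def Sop_def Iop_def Xf_def complex_eq_iff power2_eq_square algebra_simps)

lemma over_fixed_Iop_Xf_in_Tsp:
  assumes "over_fixed d n u p" "\<xi> \<in> nfrak d n u"
  shows "Iop (Xf \<xi> p) \<in> Tsp d n u p"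
  using assms
  by (simp add: Tsp_def dmuI_Iop_Xf dmuC_Iop_Xf over_fixed_gmet_Xf_Xf)
    (simp add: Cdd_def Iop_def Xf_def nfrak_def)

lemma over_fixed_Top_Xf_in_Tsp:
  assumes "over_fixed d n u p" "\<xi> \<in> nfrak d n u"
  shows "Top (Xf \<xi> p) \<in> Tsp d n u p"
  using assms
  by (simp add: Tsp_def dmuI_Top_Xf dmuC_Top_Xf over_fixed_gmet_Xf_Xf)
    (simp add: Cdd_def Top_def Sop_def Iop_def Xf_def nfrak_def)

lemma omega_Iop_Top_Xf: "omega d Iop (Top (Xf \<xi> p)) v = - Re (dmuC d p v \<xi>)"
  unfolding omega_def gmet_def dmuC_def Re_sum sum_negf[symmetric]
  by (intro sum.cong) (simp_all add: Top_def Sop_def Iop_def Xf_def algebra_simps)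

lemma omega_Sop_Iop_Xf: "omega d Sop (Iop (Xf \<xi> p)) v = - Im (dmuC d p v \<xi>)"
  unfolding omega_def gmet_def dmuC_def Re_sum Im_sum sum_negf[symmetric]
  by (intro sum.cong) (simp_all add: Sop_def Iop_def Xf_def algebra_simps)

lemma omega_Top_Iop_Xf: "omega d Top (Iop (Xf \<xi> p)) v = Re (dmuC d p v \<xi>)"
  unfolding omega_def gmet_def dmuC_def Re_sum
  by (intro sum.cong) (simp_all add: Top_def Sop_def Iop_def Xf_def algebra_simps)

lemma Iop_Xf_eq_Xf_imp_zero:
  assumes "Iop (Xf \<xi> p) = Xf \<eta> p"
  shows "Iop (Xf \<xi> p) = zero_pt"
proof -
  have "complex_of_real (\<xi> k) * fst p k = 0 \<and> complex_of_real (\<xi> k) * snd p k = 0" for k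
  proof -
    have "Complex (\<xi> k) (\<eta> k) * fst p k = 0" "Complex (\<xi> k) (- \<eta> k) * snd p k = 0"
      using fun_cong[OF arg_cong[OF assms, of fst], of k] fun_cong[OF arg_cong[OF assms, of snd], of k]
      by (simp_all add: Complex_eq Iop_def Xf_def algebra_simps neg_eq_iff_add_eq_0)
    then show ?thesis by (auto simp: Complex_eq_0)
  qed
  then show ?thesis by (simp add: Iop_def Xf_def fun_eq_iff)
qed

lemma Top_Xf_eq_Xf_imp_relation:
  assumes "Top (Xf \<xi> p) = Xf \<eta> p"
  shows "padd (Iop (Xf \<eta> p)) (padd (Sop (Xf \<xi> p)) (Top (Xf (\<lambda>_. 0) p))) = zero_pt"
proof -
  have "Iop (Xf \<eta> p) = Iop (Top (Xf \<xi> p))" using assms by simp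
  then show ?thesis by (simp add: padd_def Iop_def Sop_def Top_def Xf_def)
qed

lemma over_fixed_induced_degenerate:
  assumes S: "condS d n u Z" and p: "p \<in> Z" "over_fixed d n u p"
    and \<xi>: "\<xi> \<in> nfrak d n u" "\<xi> \<noteq> (\<lambda>_. 0)"
  shows "induced_degenerate d n u Iop p \<and> induced_degenerate d n u Sop p
    \<and> induced_degenerate d n u Top p"
proof -
  have zero: "(\<lambda>_. 0) \<in> nfrak d n u" by (simp add: nfrak_def)
  have Iop_notin: "Iop (Xf \<xi> p) \<notin> Nsp d n u p"
  proof
    assume "Iop (Xf \<xi> p) \<in> Nsp d n u p"
    then have "Iop (Xf \<xi> p) = zero_pt"
      by (auto simp: Nsp_def intro: Iop_Xf_eq_Xf_imp_zero)
    then have "padd (Iop (Xf \<xi> p)) (padd (Sop (Xf (\<lambda>_. 0) p)) (Top (Xf (\<lambda>_. 0) p))) = zero_pt"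
      by (simp only:) (simp add: padd_def Sop_def Top_def Iop_def Xf_def)
    then have "\<xi> = (\<lambda>_. 0)" using condS_D[OF S p(1) \<xi>(1) zero zero] by blast
    with \<xi>(2) show False ..
  qed
  have Top_notin: "Top (Xf \<xi> p) \<notin> Nsp d n u p"
  proof
    assume "Top (Xf \<xi> p) \<in> Nsp d n u p"
    then obtain \<eta> where "\<eta> \<in> nfrak d n u" "Top (Xf \<xi> p) = Xf \<eta> p" by (auto simp: Nsp_def)
    then have "\<xi> = (\<lambda>_. 0)"
      using condS_D[OF S p(1) _ \<xi>(1) zero] Top_Xf_eq_Xf_imp_relation by blast
    with \<xi>(2) show False ..
  qed
  have "dmuC d p w \<xi> = 0" if "w \<in> Tsp d n u p" for w
    using that \<xi>(1) by (simp add: Tsp_def)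
  then show ?thesis
    unfolding induced_degenerate_def
    using over_fixed_Iop_Xf_in_Tsp[OF p(2) \<xi>(1)] over_fixed_Top_Xf_in_Tsp[OF p(2) \<xi>(1)]
      Iop_notin Top_notin
    by (auto simp: omega_Iop_Top_Xf omega_Sop_Iop_Xf omega_Top_Iop_Xf)
qed

theorem proposition6p4:
  fixes d n :: nat and u :: "nat \<Rightarrow> nat \<Rightarrow> int"
    and lam1 lam2 lam3 :: "nat \<Rightarrow> real"
  assumes span: "spans d n u"
  defines "Z \<equiv> mu0 d n u lam1 lam2 lam3"
  shows
    "((\<exists>p\<in>Z. over_fixed d n u p) \<longrightarrow>
        (\<exists>(a :: nat \<Rightarrow> real) (b :: nat \<Rightarrow> complex). \<forall>k<d.
           (\<Sum>j<n. a j * of_int (u k j)) - lam1 k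
              \<ge> cmod ((\<Sum>j<n. b j * of_int (u k j)) - (complex_of_real (lam2 k) + \<i> * complex_of_real (lam3 k)))
         \<and> (\<Sum>j<n. a j * of_int (u k j)) - lam1 k
              = cmod ((\<Sum>j<n. b j * of_int (u k j)) - (complex_of_real (lam2 k) + \<i> * complex_of_real (lam3 k)))))
     \<and> (\<forall>p\<in>Z. over_fixed d n u p \<and> Nsp d n u p \<noteq> {((\<lambda>_. 0), (\<lambda>_. 0))} \<longrightarrow> \<not> condD d n u p)
     \<and> (n < d \<and> acts_freely d n u Z \<and> condS d n u Z \<longrightarrow>
          regular_on d n u Z \<and>
          (\<forall>p\<in>Z. over_fixed d n u p \<longrightarrow>
             induced_degenerate d n u Iop p \<and> induced_degenerate d n u Sop p
             \<and> induced_degenerate d n u Top p))"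
proof -
  have Z: "p \<in> mu0 d n u lam1 lam2 lam3" if "p \<in> Z" for p
    using that by (simp add: Z_def)
  have degenerate: "induced_degenerate d n u Iop p \<and> induced_degenerate d n u Sop p
      \<and> induced_degenerate d n u Top p"
    if "n < d" "condS d n u Z" "p \<in> Z" "over_fixed d n u p" for p
    using nfrak_nontrivial[OF that(1)] over_fixed_induced_degenerate[OF that(2-4)] by blast
  show ?thesis
  proof (intro conjI impI ballI)
    fix p assume "p \<in> Z" "over_fixed d n u p \<and> Nsp d n u p \<noteq> {zero_pt}"
    then show "\<not> condD d n u p" using over_fixed_not_condD by blast
  next
    assume "n < d \<and> acts_freely d n u Z \<and> condS d n u Z"
    then show "regular_on d n u Z" by (blast intro: condS_imp_regular_on)
  qed (use Z over_fixed_imp_in_K_on_all_walls degenerate in blast)+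
qed

end
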